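(* Let $U\ge 0$ be a random variable with distribution function $F(z)=P(U\le z)$, and for $p\in[0,1)$ let $\xi_p=\inf\{z\ge 0: F(z)\ge p\}$ denote its $p$-th quantile. Let $w:[0,1]\to[0,1]$ be continuous, nondecreasing, with $w(0)=0$, $w(1)=1$, and Hölder continuous of order $\alpha\in(0,1]$ with constant $H>0$, and suppose there is $\gamma\le\alpha$ with $\int_0^\infty P(U>z)^{\gamma}\,dz<\infty$. Then $$\lim_{n\to\infty}\sum_{i=0}^{n-1}\xi_{i/n}\Big(w\big(\tfrac{n-i}{n}\big)-w\big(\tfrac{n-i-1}{n}\big)\Big)=\int_0^\infty w\big(P(U>z)\big)\,dz<\infty .$$
   Context: A function $f:[0,1]\to\mathbb{R}$ is Hölder continuous of order $\alpha\in(0,1]$ with constant $H>0$ if $|f(x)-f(y)|\le H|x-y|^{\alpha}$ for all $x,y\in[0,1]$. (In the paper this is applied with $U=u^+(X)$, $w=w^+$ and with $U=u^-(X)$, $w=w^-$.) *)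

theory Defs
  imports "HOL-Probability.Probability"
begin

definition distr_fun :: "'a measure \<Rightarrow> ('a \<Rightarrow> real) \<Rightarrow> real \<Rightarrow> real" where
  "distr_fun M U z = measure M {x \<in> space M. U x \<le> z}"

definition quantile :: "'a measure \<Rightarrow> ('a \<Rightarrow> real) \<Rightarrow> real \<Rightarrow> real" where
  "quantile M U p = Inf {z. 0 \<le> z \<and> distr_fun M U z \<ge> p}"

definition hoelder_on01 :: "real \<Rightarrow> real \<Rightarrow> (real \<Rightarrow> real) \<Rightarrow> bool" where
  "hoelder_on01 \<alpha> H f \<longleftrightarrow>
     (\<forall>x\<in>{0..1}. \<forall>y\<in>{0..1}. \<bar>f x - f y\<bar> \<le> H * \<bar>x - y\<bar> powr \<alpha>)"

end

theory Submission
  imports Defs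
begin

text \<open>
  Writing \<open>S(z) = P(U > z)\<close>, the \<open>k\<close>-th increment \<open>w(k/n) - w((k-1)/n)\<close> is
  multiplied by the quantile at \<open>1 - k/n\<close>, which is the length of the interval
  \<open>{z \<ge> 0. k/n < S(z)}\<close>. Hence the sum is the integral over \<open>z \<ge> 0\<close> of the telescoping
  sum \<open>w(m/n)\<close>, where \<open>m/n\<close> is the largest grid point below \<open>S(z)\<close>. These step functions
  converge to \<open>w(S(z))\<close> from below by continuity of \<open>w\<close>, and \<open>w(S) \<le> H S\<^sup>\<alpha> \<le> H S\<^sup>\<gamma>\<close> is
  integrable, so dominated convergence applies.
\<close>

definition survival :: "'a measure \<Rightarrow> ('a \<Rightarrow> real) \<Rightarrow> real \<Rightarrow> real" where
  "survival M U z = measure M {x \<in> space M. z < U x}"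

text \<open>For \<open>s > 0\<close> this is the largest multiple of \<open>1/n\<close> strictly below \<open>s\<close>.\<close>
definition lower_grid_point :: "nat \<Rightarrow> real \<Rightarrow> real" where
  "lower_grid_point n s = real (nat \<lceil>real n * s\<rceil> - 1) / real n"

lemma nat_ceiling_minus_one_bounds:
  fixes x :: real
  assumes "0 \<le> x"
  shows "x - 1 \<le> real (nat \<lceil>x\<rceil> - 1)" and "real (nat \<lceil>x\<rceil> - 1) \<le> x"
proof -
  have "real (nat \<lceil>x\<rceil> - 1) = real (nat (\<lceil>x\<rceil> - 1))"
    by (simp add: nat_diff_distrib')
  also have "\<dots> = max 0 (of_int \<lceil>x\<rceil> - 1)"
    by (cases "\<lceil>x\<rceil> \<ge> 1") auto
  finally show "x - 1 \<le> real (nat \<lceil>x\<rceil> - 1)" "real (nat \<lceil>x\<rceil> - 1) \<le> x"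
    using assms by linarith+
qed

lemma lower_grid_point_ge:
  assumes "0 < n" "0 \<le> s"
  shows "s - 1 / real n \<le> lower_grid_point n s"
proof -
  have "(real n * s - 1) / real n \<le> lower_grid_point n s"
    unfolding lower_grid_point_def using nat_ceiling_minus_one_bounds(1)[of "real n * s"] assms
    by (intro divide_right_mono) auto
  then show ?thesis using assms(1) by (simp add: diff_divide_distrib)
qed

lemma lower_grid_point_le:
  assumes "0 \<le> s"
  shows "lower_grid_point n s \<le> s"
proof (cases "n = 0")
  case False
  have "lower_grid_point n s \<le> real n * s / real n"
    unfolding lower_grid_point_def using nat_ceiling_minus_one_bounds(2)[of "real n * s"] assms
    by (intro divide_right_mono) auto
  with False show ?thesis by simp
qed (simp add: lower_grid_point_def assms)

lemma lower_grid_point_between_0_1: "s \<in> {0..1} \<Longrightarrow> lower_grid_point n s \<in> {0..1}"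
  using lower_grid_point_le[of s n] by (simp add: lower_grid_point_def)

lemma mono_lower_grid_point: "mono (lower_grid_point n)"
  unfolding lower_grid_point_def
  by (intro monoI divide_right_mono of_nat_mono diff_le_mono nat_mono ceiling_mono
        mult_left_mono) auto

lemma lower_grid_point_tendsto:
  assumes "0 \<le> s"
  shows "(\<lambda>n. lower_grid_point n s) \<longlonglongrightarrow> s"
proof (rule tendsto_sandwich)
  show "(\<lambda>n. s - 1 / real n) \<longlonglongrightarrow> s"
    using tendsto_diff[OF tendsto_const lim_inverse_n'] by simp
  show "eventually (\<lambda>n. s - 1 / real n \<le> lower_grid_point n s) sequentially"
    "eventually (\<lambda>n. lower_grid_point n s \<le> s) sequentially"
    using lower_grid_point_ge[OF _ assms] lower_grid_point_le[OF assms]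
    by (auto simp: eventually_sequentially intro!: exI[of _ 1])
qed simp

lemma grid_points_below_eq:
  assumes "0 < n" "s \<le> 1"
  shows "{k \<in> {1..n}. real k / real n < s} = {1..nat \<lceil>real n * s\<rceil> - 1}"
proof -
  define m where "m = nat \<lceil>real n * s\<rceil> - 1"
  have n: "real n > 0" using assms(1) by simp
  have below_iff: "real k / real n < s \<longleftrightarrow> k \<le> m" if "1 \<le> k" for k
  proof -
    have "real k / real n < s \<longleftrightarrow> int k < \<lceil>real n * s\<rceil>"
      using n by (simp add: divide_less_eq mult.commute less_ceiling_iff)
    also have "\<dots> \<longleftrightarrow> k \<le> m" using that unfolding m_def by linarith
    finally show ?thesis .
  qed
  have "\<lceil>real n * s\<rceil> \<le> int n"
    using assms n by (simp add: ceiling_le_iff mult_left_le)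
  then have "m \<le> n" unfolding m_def by linarith
  with below_iff show ?thesis unfolding m_def[symmetric] by fastforce
qed

lemma sum_increments_below_grid_point:
  fixes f :: "real \<Rightarrow> 'a::ab_group_add"
  assumes "0 < n" "s \<le> 1"
  shows "(\<Sum>k \<in> {k \<in> {1..n}. real k / real n < s}. f (real k / real n) - f (real (k - 1) / real n))
    = f (lower_grid_point n s) - f 0"
proof -
  define m where "m = nat \<lceil>real n * s\<rceil> - 1"
  have "(\<Sum>k \<in> {k \<in> {1..n}. real k / real n < s}. f (real k / real n) - f (real (k - 1) / real n))
      = (\<Sum>k \<in> {Suc 0..m}. f (real k / real n) - f (real (k - 1) / real n))"
    unfolding grid_points_below_eq[OF assms] m_def by simp
  also have "\<dots> = f (real m / real n) - f (real 0 / real n)"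
    by (rule sum_telescope'') simp
  finally show ?thesis by (simp add: lower_grid_point_def m_def)
qed

lemma Inf_superlevel_le_iff:
  fixes F :: "real \<Rightarrow> real"
  assumes mono: "mono F" and right_cont: "\<And>a. continuous (at_right a) F"
    and lim: "(F \<longlongrightarrow> 1) at_top" and "p < 1" "0 \<le> z"
  shows "Inf {z. 0 \<le> z \<and> p \<le> F z} \<le> z \<longleftrightarrow> p \<le> F z"
    and "0 \<le> Inf {z. 0 \<le> z \<and> p \<le> F z}"
proof -
  define A where "A = {z. 0 \<le> z \<and> p \<le> F z}"
  obtain x0 where x0: "\<And>x. x \<ge> x0 \<Longrightarrow> F x > p"
    using order_tendstoD(1)[OF lim \<open>p < 1\<close>] by (auto simp: eventually_at_top_linorder)
  have "max x0 0 \<in> A" using x0[of "max x0 0"] by (auto simp: A_def)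
  then have ne: "A \<noteq> {}" by blast
  have bdd: "bdd_below A" unfolding A_def by (rule bdd_belowI[of _ 0]) simp
  show "0 \<le> Inf A" using ne by (rule cInf_greatest) (simp add: A_def)
  have above: "p \<le> F t" if "Inf A < t" for t
  proof -
    obtain a where "a \<in> A" "a < t" using cInf_less_iff[OF ne bdd] \<open>Inf A < t\<close> by blast
    then show ?thesis using monoD[OF mono, of a t] by (simp add: A_def)
  qed
  show "Inf A \<le> z \<longleftrightarrow> p \<le> F z"
  proof
    assume "p \<le> F z"
    then show "Inf A \<le> z" using \<open>0 \<le> z\<close> bdd by (intro cInf_lower) (auto simp: A_def)
  next
    assume "Inf A \<le> z"
    have "(F \<longlongrightarrow> F z) (at_right z)" using right_cont[of z] by (simp add: continuous_within)
    moreover have "eventually (\<lambda>t. p \<le> F t) (at_right z)"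
      using eventually_at_right_less[of z] by eventually_elim (use \<open>Inf A \<le> z\<close> above in auto)
    ultimately show "p \<le> F z" by (rule tendsto_lowerbound) simp
  qed
qed

lemma distr_fun_eq_cdf:
  assumes "U \<in> borel_measurable M"
  shows "distr_fun M U = cdf (distr M borel U)"
proof
  fix z
  have "U -` {..z} \<inter> space M = {x \<in> space M. U x \<le> z}" by auto
  then show "distr_fun M U z = cdf (distr M borel U) z"
    using assms by (simp add: distr_fun_def cdf_def2 measure_distr)
qed

lemma borel_measurable_mono_on_comp_antimono:
  fixes g w :: "real \<Rightarrow> real"
  assumes "antimono g" "\<And>z. g z \<in> {0..1}" "mono_on {0..1} w"
  shows "(\<lambda>z. w (g z)) \<in> borel_measurable borel"
proof -
  have "mono (\<lambda>z. - w (g z))"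
    using assms by (auto intro!: monoI mono_onD[OF assms(3)] dest: antimonoD)
  then have "(\<lambda>z. - (- w (g z))) \<in> borel_measurable borel"
    using borel_measurable_mono borel_measurable_uminus by blast
  then show ?thesis by simp
qed

lemma hoelder_on01_powr_bound:
  assumes "hoelder_on01 \<alpha> H w" "w 0 = 0" "0 \<le> H" "\<gamma> \<le> \<alpha>" "s \<in> {0..1}"
  shows "\<bar>w s\<bar> \<le> H * s powr \<gamma>"
proof -
  have "\<bar>w s - w 0\<bar> \<le> H * \<bar>s - 0\<bar> powr \<alpha>"
    using assms(1,5) unfolding hoelder_on01_def by (meson atLeastAtMost_iff order_refl zero_le_one)
  also have "\<dots> = H * s powr \<alpha>" using assms(5) by simp
  also have "\<dots> \<le> H * s powr \<gamma>"
    using assms(3-5) by (intro mult_left_mono powr_mono') auto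
  finally show ?thesis using assms(2) by simp
qed

context prob_space
begin

lemma
  assumes "U \<in> borel_measurable M" "p < 1"
  shows quantile_le_iff: "0 \<le> z \<Longrightarrow> quantile M U p \<le> z \<longleftrightarrow> p \<le> distr_fun M U z"
    and quantile_nonneg: "0 \<le> quantile M U p"
proof -
  interpret D: real_distribution "distr M borel U" using assms(1) by simp
  have "mono (cdf (distr M borel U))" by (intro monoI D.cdf_nondecreasing)
  note Inf_superlevel = Inf_superlevel_le_iff[OF this D.cdf_is_right_cont D.cdf_lim_at_top_prob \<open>p < 1\<close>]
  show "0 \<le> z \<Longrightarrow> quantile M U p \<le> z \<longleftrightarrow> p \<le> distr_fun M U z"
    using Inf_superlevel(1) by (simp add: quantile_def distr_fun_eq_cdf[OF assms(1)])
  show "0 \<le> quantile M U p"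
    using Inf_superlevel(2)[OF order_refl] by (simp add: quantile_def distr_fun_eq_cdf[OF assms(1)])
qed

lemma survival_eq_1_minus_distr_fun:
  assumes "U \<in> borel_measurable M"
  shows "survival M U z = 1 - distr_fun M U z"
proof -
  have "{x \<in> space M. U x \<le> z} = space M - {x \<in> space M. z < U x}" by auto
  then show ?thesis
    unfolding survival_def distr_fun_def using assms by (simp add: prob_compl)
qed

lemma survival_between_0_1: "survival M U z \<in> {0..1}"
  by (simp add: survival_def)

lemma antimono_survival:
  assumes "U \<in> borel_measurable M"
  shows "antimono (survival M U)"
proof -
  interpret D: real_distribution "distr M borel U" using assms by simp
  show ?thesis
    by (intro antimonoI)
       (simp add: survival_eq_1_minus_distr_fun assms distr_fun_eq_cdf D.cdf_nondecreasing)
qed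

lemma indicator_below_quantile:
  assumes "U \<in> borel_measurable M" "0 \<le> z" "0 < q"
  shows "indicator {0..<quantile M U (1 - q)} z = (if q < survival M U z then 1 else 0 :: real)"
  using quantile_le_iff[OF assms(1), of "1 - q" z] assms
  by (auto simp: indicator_def survival_eq_1_minus_distr_fun)

lemma set_integrable_comp_survival:
  fixes w :: "real \<Rightarrow> real"
  assumes "U \<in> borel_measurable M" "mono_on {0..1} w"
    and "hoelder_on01 \<alpha> H w" "w 0 = 0" "0 \<le> H" "\<gamma> \<le> \<alpha>"
    and "set_integrable lborel {0..} (\<lambda>z. survival M U z powr \<gamma>)"
  shows "set_integrable lborel {0..} (\<lambda>z. w (survival M U z))"
proof (rule set_integrable_bound[OF assms(7)[THEN set_integrable_mult_right[where a=H]]])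
  show "set_borel_measurable lborel {0..} (\<lambda>z. w (survival M U z))"
    using borel_measurable_mono_on_comp_antimono[OF antimono_survival survival_between_0_1]
      assms(1,2) by (simp add: set_borel_measurable_def)
  show "AE z in lborel. z \<in> {0..} \<longrightarrow> norm (w (survival M U z)) \<le> norm (H * survival M U z powr \<gamma>)"
    using hoelder_on01_powr_bound[OF assms(3-6) survival_between_0_1] assms(5) by simp
qed

lemma quantile_sum_eq_step_integral:
  fixes w :: "real \<Rightarrow> real"
  assumes "U \<in> borel_measurable M" "w 0 = 0" "0 < n"
  shows "(\<Sum>i<n. quantile M U (real i / real n) *
           (w (real (n - i) / real n) - w (real (n - i - 1) / real n)))
    = (LINT z:{0..}|lborel. w (lower_grid_point n (survival M U z)))"
proof -
  define c where "c k = w (real k / real n) - w (real (k - 1) / real n)" for k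
  define I where "I k = {0..<quantile M U (1 - real k / real n)}" for k
  have step: "(\<Sum>k\<in>{1..n}. c k * indicator (I k) z)
      = indicator {0..} z * w (lower_grid_point n (survival M U z))" for z
  proof (cases "0 \<le> z")
    case True
    have "(\<Sum>k\<in>{1..n}. c k * indicator (I k) z)
        = (\<Sum>k\<in>{1..n}. if real k / real n < survival M U z then c k else 0)"
      unfolding I_def using True assms(3)
      by (intro sum.cong) (auto simp: indicator_below_quantile[OF assms(1)])
    also have "\<dots> = w (lower_grid_point n (survival M U z))"
      using sum_increments_below_grid_point[OF assms(3), of "survival M U z" w] survival_between_0_1
      by (simp add: sum.inter_filter[symmetric] c_def assms(2))
    finally show ?thesis using True by simp
  qed (simp add: I_def indicator_def)
  have "(\<Sum>i<n. quantile M U (real i / real n) *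
           (w (real (n - i) / real n) - w (real (n - i - 1) / real n)))
      = (\<Sum>k\<in>{1..n}. c k * quantile M U (real (n - k) / real n))"
    by (rule sum.reindex_bij_witness[of _ "\<lambda>k. n - k" "\<lambda>i. n - i"]) (auto simp: c_def)
  also have "\<dots> = (\<Sum>k\<in>{1..n}. c k * quantile M U (1 - real k / real n))"
    using assms(3) by (intro sum.cong) (auto simp: diff_divide_distrib)
  also have "\<dots> = (\<Sum>k\<in>{1..n}. integral\<^sup>L lborel (\<lambda>z. c k * indicator (I k) z))"
    using quantile_nonneg[OF assms(1)] by (intro sum.cong) (auto simp: I_def)
  also have "\<dots> = integral\<^sup>L lborel (\<lambda>z. \<Sum>k\<in>{1..n}. c k * indicator (I k) z)"
    using quantile_nonneg[OF assms(1)]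
    by (intro Bochner_Integration.integral_sum[symmetric]) (auto simp: I_def)
  also have "\<dots> = (LINT z:{0..}|lborel. w (lower_grid_point n (survival M U z)))"
    unfolding step set_lebesgue_integral_def by simp
  finally show ?thesis .
qed

lemma step_integral_tendsto:
  fixes w :: "real \<Rightarrow> real"
  assumes "U \<in> borel_measurable M" "continuous_on {0..1} w" "mono_on {0..1} w"
    and "w ` {0..1} \<subseteq> {0..1}"
    and integrable: "set_integrable lborel {0..} (\<lambda>z. w (survival M U z))"
  shows "(\<lambda>n. LINT z:{0..}|lborel. w (lower_grid_point n (survival M U z)))
    \<longlonglongrightarrow> (LINT z:{0..}|lborel. w (survival M U z))"
proof -
  define g where "g = (\<lambda>z. indicator {0..} z * w (survival M U z))"
  define s where "s = (\<lambda>n z. indicator {0..} z * w (lower_grid_point n (survival M U z)))"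
  note S01 = survival_between_0_1
  have grid01: "lower_grid_point n (survival M U z) \<in> {0..1}" for n z
    by (rule lower_grid_point_between_0_1[OF S01])
  have g_integrable: "integrable lborel g"
    using integrable by (simp add: set_integrable_def g_def)
  have "antimono (\<lambda>z. lower_grid_point n (survival M U z))" for n
    using antimono_survival[OF assms(1)] mono_lower_grid_point
    by (auto intro!: antimonoI dest: antimonoD monoD)
  from borel_measurable_mono_on_comp_antimono[OF this grid01 assms(3)]
  have "s n \<in> borel_measurable lborel" for n
    by (simp add: s_def)
  moreover have "AE z in lborel. (\<lambda>n. s n z) \<longlonglongrightarrow> g z"
    using continuous_on_tendsto_compose[OF assms(2) lower_grid_point_tendsto] grid01 S01
    by (auto simp: s_def g_def intro!: tendsto_mult_left)
  moreover have "AE z in lborel. norm (s n z) \<le> g z" for n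
  proof (rule AE_I2)
    fix z
    have "0 \<le> w (lower_grid_point n (survival M U z))"
      using grid01 assms(4) by (auto simp: image_subset_iff)
    moreover have "w (lower_grid_point n (survival M U z)) \<le> w (survival M U z)"
      using grid01 S01 lower_grid_point_le by (intro mono_onD[OF assms(3)]) auto
    ultimately show "norm (s n z) \<le> g z" by (simp add: s_def g_def indicator_def)
  qed
  ultimately have "(\<lambda>n. integral\<^sup>L lborel (s n)) \<longlonglongrightarrow> integral\<^sup>L lborel g"
    using g_integrable borel_measurable_integrable[OF g_integrable]
    by (intro integral_dominated_convergence[where w=g]) auto
  then show ?thesis
    by (simp add: set_lebesgue_integral_def s_def g_def)
qed

end

theorem mainTheorem2:
  fixes M :: "'a measure" and U :: "'a \<Rightarrow> real" and w :: "real \<Rightarrow> real"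
    and \<alpha> H \<gamma> :: real
  assumes "prob_space M"
    and "U \<in> borel_measurable M"
    and "\<forall>x\<in>space M. 0 \<le> U x"
    and "continuous_on {0..1} w" and "mono_on {0..1} w"
    and "w ` {0..1} \<subseteq> {0..1}" and "w 0 = 0" and "w 1 = 1"
    and "0 < \<alpha>" and "\<alpha> \<le> 1" and "0 < H" and "hoelder_on01 \<alpha> H w"
    and "0 < \<gamma>" and "\<gamma> \<le> \<alpha>"
    and "set_integrable lborel {0..}
           (\<lambda>z. measure M {x \<in> space M. U x > z} powr \<gamma>)"
  shows "set_integrable lborel {0..} (\<lambda>z. w (measure M {x \<in> space M. U x > z})) \<and>
         (\<lambda>n. \<Sum>i<n. quantile M U (real i / real n) *
              (w (real (n - i) / real n) - w (real (n - i - 1) / real n)))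
           \<longlonglongrightarrow> (LINT z:{0..}|lborel. w (measure M {x \<in> space M. U x > z}))"
proof -
  interpret prob_space M by fact
  have integrable: "set_integrable lborel {0..} (\<lambda>z. w (survival M U z))"
    using set_integrable_comp_survival[of U w \<alpha> H \<gamma>] assms(2,5,7,11,12,14,15)
    by (simp add: survival_def)
  have "(\<lambda>n. LINT z:{0..}|lborel. w (lower_grid_point n (survival M U z)))
      \<longlonglongrightarrow> (LINT z:{0..}|lborel. w (survival M U z))"
    by (rule step_integral_tendsto[OF assms(2,4-6) integrable])
  moreover have "\<forall>\<^sub>F n in sequentially.
      (LINT z:{0..}|lborel. w (lower_grid_point n (survival M U z)))
    = (\<Sum>i<n. quantile M U (real i / real n) *
         (w (real (n - i) / real n) - w (real (n - i - 1) / real n)))"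
    using quantile_sum_eq_step_integral[of U w] assms(2,7)
    by (auto simp: eventually_sequentially intro!: exI[of _ 1])
  ultimately have "(\<lambda>n. \<Sum>i<n. quantile M U (real i / real n) *
      (w (real (n - i) / real n) - w (real (n - i - 1) / real n)))
    \<longlonglongrightarrow> (LINT z:{0..}|lborel. w (survival M U z))"
    by (rule Lim_transform_eventually)
  with integrable show ?thesis by (simp add: survival_def)
qed

end
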